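(* Let $G$ be a loopless simple edge-coloured graph with $n$ vertices and $n$ colours in which every colour class has exactly $3$ edges. Let $N$ be the set of non-star vertices of $G$, and suppose $|N|\ge 8$. Then there exist distinct $x,y\in N$ such that no colour class of $G$ dominates $\{x,y\}$.
   Context: Graphs may have parallel edges. An edge-coloured graph is simple if no colour class (set of edges of one colour) contains two parallel edges. A colour class is a star class if its three edges form a star $K_{1,3}$ (three edges sharing a common vertex, the centre, with three distinct other ends). A vertex is a star vertex if it is the centre of some star class, and a non-star vertex otherwise. A colour class $A$ dominates a pair $\{x,y\}$ of vertices if every edge in $A$ has at least one end in $\{x,y\}$. *)

theory Defs
  imports Main
begin

(* Parallel edges of different colours are allowed (the same pair may lie in several
   classes); representing a colour class as a SET of vertex pairs means it contains no
   two parallel edges, i.e. the colouring is simple.  card (C k) = 3 then says the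
   class has exactly three edges. *)

definition edge_of :: "'a set \<Rightarrow> 'a set \<Rightarrow> bool" where
  "edge_of V e \<longleftrightarrow> (\<exists>x y. x \<noteq> y \<and> x \<in> V \<and> y \<in> V \<and> e = {x, y})"

definition coloured_graph :: "'a set \<Rightarrow> 'c set \<Rightarrow> ('c \<Rightarrow> 'a set set) \<Rightarrow> bool" where
  "coloured_graph V K C \<longleftrightarrow> finite V \<and> finite K \<and>
     (\<forall>k\<in>K. \<forall>e\<in>C k. edge_of V e)"

definition star_class_centre :: "('c \<Rightarrow> 'a set set) \<Rightarrow> 'c \<Rightarrow> 'a \<Rightarrow> bool" where
  "star_class_centre C k v \<longleftrightarrow>
     (\<exists>a b c. a \<noteq> b \<and> a \<noteq> c \<and> b \<noteq> c \<and> a \<noteq> v \<and> b \<noteq> v \<and> c \<noteq> v \<and>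
              C k = {{v, a}, {v, b}, {v, c}})"

definition star_vertex :: "'c set \<Rightarrow> ('c \<Rightarrow> 'a set set) \<Rightarrow> 'a \<Rightarrow> bool" where
  "star_vertex K C v \<longleftrightarrow> (\<exists>k\<in>K. star_class_centre C k v)"

definition non_star_vertices :: "'a set \<Rightarrow> 'c set \<Rightarrow> ('c \<Rightarrow> 'a set set) \<Rightarrow> 'a set" where
  "non_star_vertices V K C = {v \<in> V. \<not> star_vertex K C v}"

definition dominates :: "('c \<Rightarrow> 'a set set) \<Rightarrow> 'c \<Rightarrow> 'a \<Rightarrow> 'a \<Rightarrow> bool" where
  "dominates C k x y \<longleftrightarrow> (\<forall>e\<in>C k. x \<in> e \<or> y \<in> e)"

end

theory Submission
  imports Defs
begin

text \<open>Every star vertex is the centre of some star class, and a class has at most one centre,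
  so there are at least as many star classes as star vertices; with \<open>|K| = |V|\<close> the remaining
  classes number at most \<open>|N|\<close>. A star class dominates no pair of non-star vertices, and a class
  of three edges without a common vertex dominates at most three pairs. Hence if every pair of
  \<open>N\<close> were dominated, \<open>|N|(|N| - 1)/2 \<le> 3|N|\<close>, i.e. \<open>|N| \<le> 7\<close>.\<close>

definition dominated_pairs :: "'a set set \<Rightarrow> 'a set set" where
  "dominated_pairs E = {{x, y} | x y. x \<noteq> y \<and> (\<forall>e\<in>E. x \<in> e \<or> y \<in> e)}"

lemma dominated_pairs_disjoint_edges:
  assumes "card e1 = 2" "card e2 = 2" "card e3 = 2"
    and "e3 \<noteq> e1" "e3 \<noteq> e2" and disj: "e1 \<inter> e2 = {}"
  shows "finite (dominated_pairs {e1, e2, e3}) \<and> card (dominated_pairs {e1, e2, e3}) \<le> 3"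
proof -
  have fin: "finite e1" "finite e2" "finite e3"
    using assms(1-3) card.infinite by fastforce+
  define F where "F = e1 \<times> e2 - (e1 - e3) \<times> (e2 - e3)"
  have sub: "dominated_pairs {e1, e2, e3} \<subseteq> (\<lambda>(x, y). {x, y}) ` F"
  proof
    fix A assume "A \<in> dominated_pairs {e1, e2, e3}"
    then obtain x y where xy: "A = {x, y}" "x \<in> e1 \<or> y \<in> e1" "x \<in> e2 \<or> y \<in> e2"
        "x \<in> e3 \<or> y \<in> e3"
      unfolding dominated_pairs_def by auto
    show "A \<in> (\<lambda>(x, y). {x, y}) ` F"
    proof (cases "x \<in> e1")
      case True
      then show ?thesis using xy disj unfolding F_def by (intro image_eqI[of _ _ "(x, y)"]) auto
    next
      case False
      then show ?thesis using xy disj unfolding F_def by (intro image_eqI[of _ _ "(y, x)"]) auto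
    qed
  qed
  have "e1 - e3 \<noteq> {}" "e2 - e3 \<noteq> {}"
    using card_subset_eq[OF fin(3)] assms(1-5) by (metis Diff_eq_empty_iff)+
  then have "card ((e1 - e3) \<times> (e2 - e3)) \<ge> 1"
    using fin by (simp add: card_cartesian_product Suc_le_eq card_gt_0_iff)
  moreover have "card (e1 \<times> e2) = 4"
    using assms(1,2) by (simp add: card_cartesian_product)
  moreover have "card F = card (e1 \<times> e2) - card ((e1 - e3) \<times> (e2 - e3))"
    unfolding F_def using fin by (intro card_Diff_subset) auto
  ultimately have "card F \<le> 3" by linarith
  moreover have "finite F" unfolding F_def using fin by auto
  ultimately show ?thesis
    using sub by (meson card_image_le card_mono finite_imageI finite_subset le_trans)
qed

lemma dominated_pairs_triangle:
  assumes "card e1 = 2" "card e2 = 2" "card e3 = 2"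
    and "e1 \<inter> e2 \<noteq> {}" "e1 \<inter> e3 \<noteq> {}" "e2 \<inter> e3 \<noteq> {}"
    and "e1 \<inter> e2 \<inter> e3 = {}"
  shows "dominated_pairs {e1, e2, e3} \<subseteq> {e1, e2, e3}"
proof -
  obtain u v w where "u \<in> e1" "u \<in> e2" "v \<in> e1" "v \<in> e3" "w \<in> e2" "w \<in> e3"
    using assms(4-6) by blast
  moreover from this have "u \<noteq> v" "u \<noteq> w" "v \<noteq> w" using assms(7) by auto
  ultimately have "e1 = {u, v}" "e2 = {u, w}" "e3 = {v, w}"
    using assms(1-3) by (auto simp: card_2_iff)
  then show ?thesis
    unfolding dominated_pairs_def using \<open>u \<noteq> v\<close> \<open>u \<noteq> w\<close> \<open>v \<noteq> w\<close>
    by (auto simp: insert_commute)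
qed

lemma card_dominated_pairs_le_3:
  assumes "card e1 = 2" "card e2 = 2" "card e3 = 2"
    and "e1 \<noteq> e2" "e1 \<noteq> e3" "e2 \<noteq> e3"
    and "e1 \<inter> e2 \<inter> e3 = {}"
  shows "finite (dominated_pairs {e1, e2, e3}) \<and> card (dominated_pairs {e1, e2, e3}) \<le> 3"
proof -
  consider "e1 \<inter> e2 = {}" | "e1 \<inter> e3 = {}" | "e2 \<inter> e3 = {}"
    | "e1 \<inter> e2 \<noteq> {}" "e1 \<inter> e3 \<noteq> {}" "e2 \<inter> e3 \<noteq> {}" by blast
  then show ?thesis
  proof cases
    case 1
    then show ?thesis using dominated_pairs_disjoint_edges[of e1 e2 e3] assms by auto
  next
    case 2
    then show ?thesis
      using dominated_pairs_disjoint_edges[of e1 e3 e2] assms by (auto simp: insert_commute)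
  next
    case 3
    have "{e1, e2, e3} = {e2, e3, e1}" by auto
    then show ?thesis using 3 dominated_pairs_disjoint_edges[of e2 e3 e1] assms by auto
  next
    case 4
    then have "dominated_pairs {e1, e2, e3} \<subseteq> {e1, e2, e3}"
      using dominated_pairs_triangle assms by blast
    moreover have "card {e1, e2, e3} \<le> 3" by (simp add: card_insert_le_m1)
    ultimately show ?thesis by (meson card_mono finite.emptyI finite.insertI le_trans finite_subset)
  qed
qed

lemma star_class_centre_unique:
  assumes "star_class_centre C k v" "star_class_centre C k w"
  shows "v = w"
proof -
  obtain a b c where abc: "a \<noteq> b" "a \<noteq> c" "b \<noteq> c" "a \<noteq> v" "b \<noteq> v" "c \<noteq> v"
      "C k = {{v, a}, {v, b}, {v, c}}"
    using assms(1) unfolding star_class_centre_def by blast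
  have "\<forall>e\<in>C k. w \<in> e" using assms(2) unfolding star_class_centre_def by auto
  then show ?thesis using abc by auto
qed

lemma dominates_star_class:
  assumes "star_class_centre C k v" "dominates C k x y"
  shows "x = v \<or> y = v"
proof -
  obtain a b c where "a \<noteq> b" "a \<noteq> c" "b \<noteq> c" "C k = {{v, a}, {v, b}, {v, c}}"
    using assms(1) unfolding star_class_centre_def by blast
  then show ?thesis using assms(2) unfolding dominates_def by auto
qed

lemma card_dominated_pairs_non_star_class:
  assumes "card (C k) = 3" "\<forall>e\<in>C k. card e = 2"
    and "\<nexists>v. star_class_centre C k v"
  shows "finite (dominated_pairs (C k)) \<and> card (dominated_pairs (C k)) \<le> 3"
proof -
  obtain e1 e2 e3 where E: "C k = {e1, e2, e3}" "e1 \<noteq> e2" "e2 \<noteq> e3" "e1 \<noteq> e3"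
    using assms(1) unfolding card_3_iff by blast
  have two: "card e1 = 2" "card e2 = 2" "card e3 = 2" using assms(2) E by auto
  have "e1 \<inter> e2 \<inter> e3 = {}"
  proof (rule ccontr)
    assume "e1 \<inter> e2 \<inter> e3 \<noteq> {}"
    then obtain v where "v \<in> e1" "v \<in> e2" "v \<in> e3" by auto
    moreover have pick: "\<exists>c. c \<noteq> v \<and> e = {v, c}" if "card e = 2" "v \<in> e" for e
      using that by (auto simp: card_2_iff insert_commute)
    ultimately obtain a b c where "a \<noteq> v" "e1 = {v, a}" "b \<noteq> v" "e2 = {v, b}" "c \<noteq> v" "e3 = {v, c}"
      using pick[OF two(1)] pick[OF two(2)] pick[OF two(3)] by blast
    then have "star_class_centre C k v"
      unfolding star_class_centre_def E(1) using E(2-4)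
      by (intro exI[where x = a] exI[where x = b] exI[where x = c]) auto
    then show False using assms(3) by blast
  qed
  then show ?thesis unfolding E using card_dominated_pairs_le_3[OF two] E by auto
qed

lemma card_non_star_classes_le:
  assumes "finite V" "finite K" "card K = card V"
  shows "card {k\<in>K. \<nexists>v. star_class_centre C k v} \<le> card (non_star_vertices V K C)"
proof -
  let ?N = "non_star_vertices V K C"
  let ?S = "{k\<in>K. \<exists>v. star_class_centre C k v}"
  let ?T = "{k\<in>K. \<nexists>v. star_class_centre C k v}"
  have "\<exists>k. k \<in> K \<and> star_class_centre C k v" if "v \<in> V - ?N" for v
    using that unfolding non_star_vertices_def star_vertex_def by blast
  then obtain g where g: "\<And>v. v \<in> V - ?N \<Longrightarrow> g v \<in> K \<and> star_class_centre C (g v) v"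
    by metis
  have "inj_on g (V - ?N)"
    by (rule inj_onI) (metis g star_class_centre_unique)
  moreover have "g ` (V - ?N) \<subseteq> ?S" using g by auto
  ultimately have "card (V - ?N) \<le> card ?S"
    using assms(2) card_inj_on_le by fastforce
  moreover have "card V = card ?N + card (V - ?N)"
  proof -
    have "?N \<subseteq> V" by (auto simp: non_star_vertices_def)
    then show ?thesis
      using card_Diff_subset[OF finite_subset] card_mono assms(1) by (metis le_add_diff_inverse)
  qed
  moreover have "card K = card ?T + card ?S"
  proof -
    have "K = ?T \<union> ?S" by auto
    moreover have "card (?T \<union> ?S) = card ?T + card ?S"
      by (rule card_Un_disjoint) (use assms(2) in auto)
    ultimately show ?thesis by simp
  qed
  ultimately show ?thesis using assms(3) by linarith
qed

lemma three_mul_card_less_card_two_subsets: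
  assumes "finite N" "card N \<ge> 8"
  shows "3 * card N < card {A. A \<subseteq> N \<and> card A = 2}"
proof -
  obtain m where m: "card N = m + 8" using assms(2) by (metis add.commute le_Suc_ex)
  have "card {A. A \<subseteq> N \<and> card A = 2} = card N * (card N - 1) div 2"
    using n_subsets[OF assms(1), of 2] choose_two by simp
  then show ?thesis unfolding m by (simp add: algebra_simps)
qed

theorem claim3p6:
  fixes V :: "'a set" and K :: "'c set" and C :: "'c \<Rightarrow> 'a set set"
  assumes "coloured_graph V K C"
    and "card K = card V"
    and "\<forall>k\<in>K. card (C k) = 3"
    and "card (non_star_vertices V K C) \<ge> 8"
  shows "\<exists>x\<in>non_star_vertices V K C. \<exists>y\<in>non_star_vertices V K C.
           x \<noteq> y \<and> (\<forall>k\<in>K. \<not> dominates C k x y)"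
proof (rule ccontr)
  assume no_pair: "\<not> ?thesis"
  define N where "N = non_star_vertices V K C"
  define T where "T = {k\<in>K. \<nexists>v. star_class_centre C k v}"
  have fin: "finite V" "finite K" and edges: "\<forall>k\<in>K. \<forall>e\<in>C k. card e = 2"
    using assms(1) unfolding coloured_graph_def edge_of_def card_2_iff by blast+
  have "finite N" using fin(1) unfolding N_def non_star_vertices_def by auto
  have pairs_dominated: "{A. A \<subseteq> N \<and> card A = 2} \<subseteq> (\<Union>k\<in>T. dominated_pairs (C k))"
  proof
    fix A assume "A \<in> {A. A \<subseteq> N \<and> card A = 2}"
    then obtain x y where xy: "A = {x, y}" "x \<noteq> y" "x \<in> N" "y \<in> N" by (auto simp: card_2_iff)
    then obtain k where k: "k \<in> K" "dominates C k x y" using no_pair N_def by blast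
    have "k \<in> T"
      using xy k dominates_star_class
      unfolding T_def N_def non_star_vertices_def star_vertex_def by fastforce
    moreover have "A \<in> dominated_pairs (C k)"
      using xy k(2) unfolding dominated_pairs_def dominates_def by auto
    ultimately show "A \<in> (\<Union>k\<in>T. dominated_pairs (C k))" by blast
  qed
  have "finite T" using fin(2) unfolding T_def by auto
  have dominated_by_T: "finite (dominated_pairs (C k)) \<and> card (dominated_pairs (C k)) \<le> 3"
    if "k \<in> T" for k
    using that assms(3) edges unfolding T_def by (intro card_dominated_pairs_non_star_class) auto
  have "card {A. A \<subseteq> N \<and> card A = 2} \<le> card (\<Union>k\<in>T. dominated_pairs (C k))"
    using pairs_dominated dominated_by_T \<open>finite T\<close> by (intro card_mono) auto
  also have "\<dots> \<le> (\<Sum>k\<in>T. card (dominated_pairs (C k)))"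
    using \<open>finite T\<close> by (rule card_UN_le)
  also have "\<dots> \<le> 3 * card T"
    using sum_bounded_above[of T "\<lambda>k. card (dominated_pairs (C k))" 3] dominated_by_T
    by auto
  also have "\<dots> \<le> 3 * card N"
    using card_non_star_classes_le[OF fin assms(2)] unfolding T_def N_def by simp
  finally show False
    using three_mul_card_less_card_two_subsets[OF \<open>finite N\<close>] assms(4) N_def by simp
qed

end
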